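(* Let $\rho$ be a polymatroid on a finite set $E$ and let $M_1,M_2,\ldots,M_k$ be matroids on $E$ with $\rho=r_{M_1}+r_{M_2}+\cdots+r_{M_k}$. (1) Let $X$ be any incidence set of $\rho$. Then there is exactly one index $i\in[k]$ for which all elements of $X$ are parallel in $M_i$ (i.e., $X$ is contained in a single parallel class of $M_i$), and for every $j\in[k]$ with $j\neq i$, no two elements of $X$ are parallel in $M_j$. If, moreover, the equation $\rho(Y)=1+\sum_{e\in Y}(\rho(e)-1)$ also holds for $Y=X$, then for every $j\neq i$, the only subsets of $X$ that are circuits of $M_j$ are singletons. (2) Let $X$ and $Y$ be incidence sets of $\rho$ and suppose there are elements $a\in X$ and $b\in Y$ with $\rho(\{a,b\})=\rho(a)+\rho(b)$. If $X\cap Y\neq\emptyset$, then $|X\cap Y|=1$, and the unique index $i$ for which the elements of $X$ are parallel in $M_i$ differs from the unique index $j$ for which the elements of $Y$ are parallel in $M_j$.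
   Context: A polymatroid on a finite set $E$ is a function $\rho:2^E\to\mathbb{Z}$ with $\rho(\emptyset)=0$, $\rho(A)\le\rho(B)$ whenever $A\subseteq B\subseteq E$, and $\rho(A\cup B)+\rho(A\cap B)\le\rho(A)+\rho(B)$ for all $A,B\subseteq E$. For matroids $M_1,\dots,M_k$ on $E$, $r_{M_1}+\cdots+r_{M_k}$ denotes the pointwise sum of their rank functions. An incidence set of $\rho$ is a subset $X\subseteq E$ with $|X|\ge 2$ such that for every $Y\subseteq X$ with $|Y|\in\{1,2,3\}$, $\rho(Y)=1+\sum_{e\in Y}(\rho(e)-1)$. Here $[k]=\{1,\dots,k\}$ and $\rho(e)$ means $\rho(\{e\})$. *)

theory Defs
  imports Main
begin

definition polymatroid :: "'a set \<Rightarrow> ('a set \<Rightarrow> int) \<Rightarrow> bool" where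
  "polymatroid E \<rho> \<longleftrightarrow> finite E \<and> \<rho> {} = 0
     \<and> (\<forall>A B. A \<subseteq> B \<and> B \<subseteq> E \<longrightarrow> \<rho> A \<le> \<rho> B)
     \<and> (\<forall>A B. A \<subseteq> E \<and> B \<subseteq> E \<longrightarrow> \<rho> (A \<union> B) + \<rho> (A \<inter> B) \<le> \<rho> A + \<rho> B)"

definition matroid_rank :: "'a set \<Rightarrow> ('a set \<Rightarrow> int) \<Rightarrow> bool" where
  "matroid_rank E r \<longleftrightarrow> finite E
     \<and> (\<forall>A. A \<subseteq> E \<longrightarrow> 0 \<le> r A \<and> r A \<le> int (card A))
     \<and> (\<forall>A B. A \<subseteq> B \<and> B \<subseteq> E \<longrightarrow> r A \<le> r B)
     \<and> (\<forall>A B. A \<subseteq> E \<and> B \<subseteq> E \<longrightarrow> r (A \<union> B) + r (A \<inter> B) \<le> r A + r B)"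

definition incidence_set :: "'a set \<Rightarrow> ('a set \<Rightarrow> int) \<Rightarrow> 'a set \<Rightarrow> bool" where
  "incidence_set E \<rho> X \<longleftrightarrow> X \<subseteq> E \<and> card X \<ge> 2
     \<and> (\<forall>Y. Y \<subseteq> X \<and> card Y \<in> {1,2,3} \<longrightarrow> \<rho> Y = 1 + (\<Sum>e\<in>Y. \<rho> {e} - 1))"

text \<open>e and f are parallel in the matroid with rank r: both non-loops and r{e,f} = 1
  (an element is parallel to itself iff it is a non-loop; parallel classes are the
  classes of this equivalence relation on non-loops).\<close>
definition parallel :: "('a set \<Rightarrow> int) \<Rightarrow> 'a \<Rightarrow> 'a \<Rightarrow> bool" where
  "parallel r e f \<longleftrightarrow> r {e} = 1 \<and> r {f} = 1 \<and> r {e, f} = 1"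

definition all_parallel :: "('a set \<Rightarrow> int) \<Rightarrow> 'a set \<Rightarrow> bool" where
  "all_parallel r X \<longleftrightarrow> (\<forall>e\<in>X. \<forall>f\<in>X. parallel r e f)"

definition no_two_parallel :: "('a set \<Rightarrow> int) \<Rightarrow> 'a set \<Rightarrow> bool" where
  "no_two_parallel r X \<longleftrightarrow> (\<forall>e\<in>X. \<forall>f\<in>X. e \<noteq> f \<longrightarrow> \<not> parallel r e f)"

definition circuit :: "'a set \<Rightarrow> ('a set \<Rightarrow> int) \<Rightarrow> 'a set \<Rightarrow> bool" where
  "circuit E r C \<longleftrightarrow> C \<subseteq> E \<and> r C < int (card C) \<and> (\<forall>D. D \<subset> C \<longrightarrow> r D = int (card D))"

end

theory Submission
  imports Defs
begin

text \<open>
  For a set function \<rho> let the deficiency of S be \<open>\<Sum>e\<in>S. \<rho> {e}\<close> minus \<open>\<rho> S\<close>.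
  It is nonnegative and monotone for polymatroids and additive over the decomposition
  \<open>\<rho> = r\<^sub>1 + \<dots> + r\<^sub>k\<close>, and for distinct e, f the deficiency of {e, f} in a matroid is
  positive exactly when e and f are parallel. On an incidence set the deficiency of a set Y
  with at most three elements is \<open>|Y| - 1\<close>. So each pair of X is parallel in exactly one
  matroid; since parallelism is transitive and a triple has deficiency only 2, all pairs of X
  are parallel in the same matroid \<open>M\<^sub>i\<close>. If X itself has deficiency \<open>|X| - 1\<close>, all of it
  is used up by \<open>M\<^sub>i\<close>, where X has rank 1; hence X, and with it every circuit inside X,
  has deficiency 0 in every other \<open>M\<^sub>j\<close>, which only loops achieve. For two incidence sets
  that are parallel classes of the same \<open>M\<^sub>i\<close> and share an element c, the chain a \<parallel> c \<parallel> b
  would give \<open>\<rho> {a, b} < \<rho> {a} + \<rho> {b}\<close>; and two common elements already force the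
  two classes into the same matroid.
\<close>

definition deficiency :: "('a set \<Rightarrow> int) \<Rightarrow> 'a set \<Rightarrow> int" where
  "deficiency \<rho> S = (\<Sum>e\<in>S. \<rho> {e}) - \<rho> S"

lemma rank_eq_one_plus_sum_iff_deficiency:
  "\<rho> Y = 1 + (\<Sum>e\<in>Y. \<rho> {e} - 1) \<longleftrightarrow> deficiency \<rho> Y = int (card Y) - 1"
  by (auto simp: deficiency_def sum_subtractf)

lemma card_pos_le_sum:
  fixes f :: "'i \<Rightarrow> int"
  assumes "finite I" and "\<forall>i\<in>I. 0 \<le> f i"
  shows "int (card {i\<in>I. 0 < f i}) \<le> sum f I"
proof -
  have "int (card {i\<in>I. 0 < f i}) = (\<Sum>i\<in>{i\<in>I. 0 < f i}. 1)"
    by simp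
  also have "\<dots> \<le> (\<Sum>i\<in>{i\<in>I. 0 < f i}. f i)"
    by (intro sum_mono) auto
  also have "\<dots> \<le> sum f I"
    using assms by (intro sum_mono2) auto
  finally show ?thesis .
qed

lemma ex1_pos_if_sum_eq_1:
  fixes f :: "'i \<Rightarrow> int"
  assumes "finite I" and "\<forall>i\<in>I. 0 \<le> f i" and "sum f I = 1"
  shows "\<exists>!i. i \<in> I \<and> 0 < f i"
proof -
  have "card {i\<in>I. 0 < f i} \<le> 1"
    using card_pos_le_sum[OF assms(1,2)] assms(3) by simp
  moreover have "{i\<in>I. 0 < f i} \<noteq> {}"
  proof
    assume "{i\<in>I. 0 < f i} = {}"
    then have "sum f I \<le> 0"
      by (intro sum_nonpos) auto
    with assms(3) show False by simp
  qed
  moreover have "finite {i\<in>I. 0 < f i}"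
    using assms(1) by simp
  ultimately have "card {i\<in>I. 0 < f i} = 1"
    by (metis card_0_eq le_antisym less_one not_le_imp_less)
  then obtain i where "{i'\<in>I. 0 < f i'} = {i}"
    by (auto simp: card_1_singleton_iff)
  then show ?thesis
    by (auto simp: set_eq_iff)
qed

context
  fixes E :: "'a set" and \<rho> :: "'a set \<Rightarrow> int"
  assumes poly: "polymatroid E \<rho>"
begin

lemma polymatroid_finite: "finite E"
  using poly unfolding polymatroid_def by blast

lemma polymatroid_empty: "\<rho> {} = 0"
  using poly unfolding polymatroid_def by blast

lemma polymatroid_mono: "A \<subseteq> B \<Longrightarrow> B \<subseteq> E \<Longrightarrow> \<rho> A \<le> \<rho> B"
  using poly unfolding polymatroid_def by blast

lemma polymatroid_submod: "A \<subseteq> E \<Longrightarrow> B \<subseteq> E \<Longrightarrow> \<rho> (A \<union> B) + \<rho> (A \<inter> B) \<le> \<rho> A + \<rho> B"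
  using poly unfolding polymatroid_def by blast

lemma polymatroid_nonneg: "A \<subseteq> E \<Longrightarrow> 0 \<le> \<rho> A"
  using polymatroid_mono[of "{}" A] polymatroid_empty by simp

lemma polymatroid_union_le: "A \<subseteq> E \<Longrightarrow> B \<subseteq> E \<Longrightarrow> \<rho> (A \<union> B) \<le> \<rho> A + \<rho> B"
  using polymatroid_submod[of A B] polymatroid_nonneg[of "A \<inter> B"] by (simp add: le_infI1)

lemma polymatroid_pair_le: "a \<in> E \<Longrightarrow> b \<in> E \<Longrightarrow> \<rho> {a, b} \<le> \<rho> {a} + \<rho> {b}"
  using polymatroid_union_le[of "{a}" "{b}"] by (simp add: insert_is_Un[of a "{b}"])

lemma polymatroid_le_sum_singletons: "S \<subseteq> E \<Longrightarrow> \<rho> S \<le> (\<Sum>e\<in>S. \<rho> {e})"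
proof -
  assume "S \<subseteq> E"
  then have "finite S"
    using polymatroid_finite finite_subset by blast
  from this \<open>S \<subseteq> E\<close> show ?thesis
  proof (induction S rule: finite_induct)
    case empty
    then show ?case using polymatroid_empty by simp
  next
    case (insert x F)
    then have "\<rho> (insert x F) \<le> \<rho> {x} + \<rho> F"
      using polymatroid_union_le[of "{x}" F] by simp
    with insert show ?case by simp
  qed
qed

lemma deficiency_nonneg: "S \<subseteq> E \<Longrightarrow> 0 \<le> deficiency \<rho> S"
  using polymatroid_le_sum_singletons by (simp add: deficiency_def)

lemma deficiency_mono:
  assumes "S \<subseteq> T" and "T \<subseteq> E"
  shows "deficiency \<rho> S \<le> deficiency \<rho> T"
proof -
  have "finite T"
    using assms(2) polymatroid_finite finite_subset by blast
  have "S \<union> (T - S) = T"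
    using assms(1) by blast
  then have "\<rho> T \<le> \<rho> S + \<rho> (T - S)"
    using polymatroid_union_le[of S "T - S"] assms by auto
  also have "\<dots> \<le> \<rho> S + (\<Sum>e\<in>T - S. \<rho> {e})"
    using polymatroid_le_sum_singletons[of "T - S"] assms(2) by auto
  finally show ?thesis
    using sum.subset_diff[OF assms(1) \<open>finite T\<close>, of "\<lambda>e. \<rho> {e}"]
    unfolding deficiency_def by linarith
qed

end

lemma parallel_sym: "parallel r e f \<longleftrightarrow> parallel r f e"
  unfolding parallel_def by (auto simp: insert_commute)

lemma parallel_refl: "parallel r e f \<Longrightarrow> parallel r e e"
  unfolding parallel_def by simp

context
  fixes E :: "'a set" and r :: "'a set \<Rightarrow> int"
  assumes M: "matroid_rank E r"
begin

lemma matroid_rank_finite: "finite E"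
  using M unfolding matroid_rank_def by blast

lemma matroid_rank_nonneg: "A \<subseteq> E \<Longrightarrow> 0 \<le> r A"
  using M unfolding matroid_rank_def by blast

lemma matroid_rank_mono: "A \<subseteq> B \<Longrightarrow> B \<subseteq> E \<Longrightarrow> r A \<le> r B"
  using M unfolding matroid_rank_def by blast

lemma matroid_rank_submod: "A \<subseteq> E \<Longrightarrow> B \<subseteq> E \<Longrightarrow> r (A \<union> B) + r (A \<inter> B) \<le> r A + r B"
  using M unfolding matroid_rank_def by blast

lemma matroid_rank_le_card: "A \<subseteq> E \<Longrightarrow> r A \<le> int (card A)"
  using M unfolding matroid_rank_def by blast

lemma matroid_rank_empty: "r {} = 0"
  using matroid_rank_nonneg[of "{}"] matroid_rank_le_card[of "{}"] by simp

lemma matroid_rank_polymatroid: "polymatroid E r"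
  unfolding polymatroid_def
  using matroid_rank_finite matroid_rank_empty matroid_rank_mono matroid_rank_submod by blast

lemma parallel_iff_rank_pair_less:
  assumes "e \<in> E" and "f \<in> E"
  shows "parallel r e f \<longleftrightarrow> r {e, f} < r {e} + r {f}"
proof -
  have "r {e} \<le> r {e, f}" "r {f} \<le> r {e, f}"
    using assms by (auto intro: matroid_rank_mono)
  moreover have "r {e} \<le> 1" "r {f} \<le> 1"
    using assms matroid_rank_le_card[of "{e}"] matroid_rank_le_card[of "{f}"] by auto
  ultimately show ?thesis
    unfolding parallel_def by auto
qed

lemma parallel_iff_deficiency_pos:
  "e \<in> E \<Longrightarrow> f \<in> E \<Longrightarrow> e \<noteq> f \<Longrightarrow> parallel r e f \<longleftrightarrow> 0 < deficiency r {e, f}"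
  by (simp add: parallel_iff_rank_pair_less deficiency_def)

lemma parallel_trans:
  assumes "parallel r a c" and "parallel r c b" and "a \<in> E" "b \<in> E" "c \<in> E"
  shows "parallel r a b"
proof -
  have "r ({a, c} \<union> {c, b}) + r ({a, c} \<inter> {c, b}) \<le> r {a, c} + r {c, b}"
    using assms by (intro matroid_rank_submod) auto
  moreover have "r {c} \<le> r ({a, c} \<inter> {c, b})" "r {a, b} \<le> r ({a, c} \<union> {c, b})"
    using assms by (auto intro: matroid_rank_mono)
  moreover have "r {a} \<le> r {a, b}"
    using assms by (auto intro: matroid_rank_mono)
  ultimately show ?thesis
    using assms(1,2) unfolding parallel_def by auto
qed

lemma rank_all_parallel:
  assumes "X \<subseteq> E" and "x \<in> X" and "all_parallel r X"
  shows "r X = 1"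
proof -
  have rx: "r {x} = 1"
    using assms unfolding all_parallel_def parallel_def by blast
  have "r (insert x F) \<le> 1" if "F \<subseteq> X" for F
  proof -
    have "finite F"
      using finite_subset[OF order_trans[OF that assms(1)] matroid_rank_finite] .
    then show ?thesis
      using that
    proof (induction F rule: finite_induct)
      case empty
      show ?case using rx by simp
    next
      case (insert y F)
      let ?G = "insert x F"
      have "r (?G \<union> {x, y}) + r (?G \<inter> {x, y}) \<le> r ?G + r {x, y}"
        using insert.prems assms by (intro matroid_rank_submod) auto
      moreover have "r {x} \<le> r (?G \<inter> {x, y})"
        using insert.prems assms by (intro matroid_rank_mono) auto
      moreover have "r {x, y} = 1"
        using insert.prems assms unfolding all_parallel_def parallel_def by blast
      moreover have "?G \<union> {x, y} = insert x (insert y F)"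
        by auto
      ultimately show ?case
        using insert rx by simp
    qed
  qed
  from this[of X] have "r X \<le> 1"
    using assms(2) by (simp add: insert_absorb)
  moreover have "r {x} \<le> r X"
    using assms by (intro matroid_rank_mono) auto
  ultimately show ?thesis
    using rx by simp
qed

lemma circuit_deficiency_pos:
  assumes "circuit E r C" and "card C \<noteq> 1"
  shows "0 < deficiency r C"
proof -
  have dep: "r C < int (card C)" and indep: "\<And>D. D \<subset> C \<Longrightarrow> r D = int (card D)"
    using assms(1) unfolding circuit_def by blast+
  have "r {e} = 1" if "e \<in> C" for e
  proof -
    have "{e} \<subset> C"
      using that assms(2) by auto
    then show ?thesis
      using indep by simp
  qed
  then have "(\<Sum>e\<in>C. r {e}) = int (card C)"
    by simp
  with dep show ?thesis
    by (simp add: deficiency_def)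
qed

end

lemma incidence_set_subset: "incidence_set E \<rho> X \<Longrightarrow> X \<subseteq> E"
  unfolding incidence_set_def by blast

lemma incidence_set_finite: "incidence_set E \<rho> X \<Longrightarrow> finite X"
  unfolding incidence_set_def by (metis card.infinite not_numeral_le_zero)

lemma incidence_set_two_elements:
  assumes "incidence_set E \<rho> X"
  obtains x y where "x \<in> X" and "y \<in> X" and "x \<noteq> y"
proof -
  have "2 \<le> card X"
    using assms unfolding incidence_set_def by blast
  then show ?thesis
    using that card_le_Suc0_iff_eq[OF incidence_set_finite[OF assms]] by fastforce
qed

lemma incidence_set_deficiency:
  assumes "incidence_set E \<rho> X" and "Y \<subseteq> X" and "card Y \<in> {1, 2, 3}"
  shows "deficiency \<rho> Y = int (card Y) - 1"
  using assms unfolding incidence_set_def rank_eq_one_plus_sum_iff_deficiency by blast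

locale matroid_sum =
  fixes E :: "'a set" and \<rho> :: "'a set \<Rightarrow> int"
    and I :: "'i set" and r :: "'i \<Rightarrow> 'a set \<Rightarrow> int"
  assumes finite_index: "finite I"
    and matroid: "i \<in> I \<Longrightarrow> matroid_rank E (r i)"
    and rank_sum: "A \<subseteq> E \<Longrightarrow> \<rho> A = (\<Sum>i\<in>I. r i A)"
begin

lemma polymatroid_summand: "i \<in> I \<Longrightarrow> polymatroid E (r i)"
  by (rule matroid_rank_polymatroid[OF matroid])

lemma deficiency_sum:
  assumes "S \<subseteq> E"
  shows "deficiency \<rho> S = (\<Sum>i\<in>I. deficiency (r i) S)"
proof -
  have "(\<Sum>e\<in>S. \<rho> {e}) = (\<Sum>e\<in>S. \<Sum>i\<in>I. r i {e})"
    using assms rank_sum by (intro sum.cong) auto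
  also have "\<dots> = (\<Sum>i\<in>I. \<Sum>e\<in>S. r i {e})"
    by (rule sum.swap)
  finally show ?thesis
    using rank_sum[OF assms] by (simp add: deficiency_def sum_subtractf)
qed

lemma card_deficient_le:
  assumes "S \<subseteq> E"
  shows "int (card {i\<in>I. 0 < deficiency (r i) S}) \<le> deficiency \<rho> S"
  unfolding deficiency_sum[OF assms]
  using finite_index deficiency_nonneg[OF polymatroid_summand assms]
  by (intro card_pos_le_sum) auto

lemma rank_pair_less_if_parallel:
  assumes "i \<in> I" and "parallel (r i) a b" and "a \<in> E" and "b \<in> E"
  shows "\<rho> {a, b} < \<rho> {a} + \<rho> {b}"
proof -
  have "(\<Sum>i\<in>I. r i {a, b}) < (\<Sum>i\<in>I. r i {a} + r i {b})"
  proof (rule sum_strict_mono_ex1[OF finite_index])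
    show "\<forall>j\<in>I. r j {a, b} \<le> r j {a} + r j {b}"
      using assms polymatroid_pair_le[OF polymatroid_summand] by blast
    show "\<exists>j\<in>I. r j {a, b} < r j {a} + r j {b}"
      using assms parallel_iff_rank_pair_less[OF matroid] by blast
  qed
  then show ?thesis
    using assms rank_sum by (simp add: sum.distrib)
qed

lemma incidence_set_ex1_parallel:
  assumes "incidence_set E \<rho> X" and "e \<in> X" and "f \<in> X" and "e \<noteq> f"
  shows "\<exists>!i. i \<in> I \<and> parallel (r i) e f"
proof -
  have E: "e \<in> E" "f \<in> E"
    using assms incidence_set_subset by blast+
  have "deficiency \<rho> {e, f} = 1"
    using incidence_set_deficiency[OF assms(1), of "{e, f}"] assms by simp
  then have "\<exists>!i. i \<in> I \<and> 0 < deficiency (r i) {e, f}"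
    using finite_index deficiency_nonneg[OF polymatroid_summand] E
    by (intro ex1_pos_if_sum_eq_1) (auto simp: deficiency_sum[symmetric])
  then show ?thesis
    using parallel_iff_deficiency_pos[OF matroid _ _ assms(4)] E by blast
qed

lemma incidence_set_parallel_index_eq:
  assumes X: "incidence_set E \<rho> X" and "e \<in> X" "f \<in> X" "g \<in> X"
    and "e \<noteq> f" "e \<noteq> g" "f \<noteq> g"
    and "i \<in> I" "j \<in> I" and "parallel (r i) e f" "parallel (r j) e g"
  shows "i = j"
proof (rule ccontr)
  assume "i \<noteq> j"
  have E: "e \<in> E" "f \<in> E" "g \<in> E"
    using assms incidence_set_subset by blast+
  obtain h where h: "h \<in> I" "parallel (r h) f g"
    using incidence_set_ex1_parallel[OF X \<open>f \<in> X\<close> \<open>g \<in> X\<close> \<open>f \<noteq> g\<close>] by blast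
  have "h \<noteq> i"
  proof
    assume "h = i"
    then have "parallel (r i) e g"
      using h assms E parallel_trans[OF matroid] by blast
    then show False
      using incidence_set_ex1_parallel[OF X \<open>e \<in> X\<close> \<open>g \<in> X\<close> \<open>e \<noteq> g\<close>] assms \<open>i \<noteq> j\<close>
      by blast
  qed
  have "h \<noteq> j"
  proof
    assume "h = j"
    then have "parallel (r j) e f"
      using h assms E parallel_trans[OF matroid] parallel_sym by metis
    then show False
      using incidence_set_ex1_parallel[OF X \<open>e \<in> X\<close> \<open>f \<in> X\<close> \<open>e \<noteq> f\<close>] assms \<open>i \<noteq> j\<close>
      by blast
  qed
  have deficient: "0 < deficiency (r m) {e, f, g}"
    if "m \<in> I" "parallel (r m) x y" "x \<in> {e, f, g}" "y \<in> {e, f, g}" "x \<noteq> y" for m x y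
  proof -
    have "0 < deficiency (r m) {x, y}"
      using that E parallel_iff_deficiency_pos[OF matroid] by blast
    also have "\<dots> \<le> deficiency (r m) {e, f, g}"
      using that E by (intro deficiency_mono[OF polymatroid_summand]) auto
    finally show ?thesis .
  qed
  have "{i, j, h} \<subseteq> {m\<in>I. 0 < deficiency (r m) {e, f, g}}"
    using assms h deficient by auto
  then have "card {i, j, h} \<le> card {m\<in>I. 0 < deficiency (r m) {e, f, g}}"
    using finite_index by (intro card_mono) auto
  also have "int \<dots> \<le> deficiency \<rho> {e, f, g}"
    using E by (intro card_deficient_le) auto
  also have "\<dots> = 2"
    using incidence_set_deficiency[OF X, of "{e, f, g}"] assms by simp
  finally show False
    using \<open>i \<noteq> j\<close> \<open>h \<noteq> i\<close> \<open>h \<noteq> j\<close> by simp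
qed

lemma incidence_set_ex_all_parallel:
  assumes X: "incidence_set E \<rho> X"
  shows "\<exists>i\<in>I. all_parallel (r i) X"
proof -
  obtain x y where xy: "x \<in> X" "y \<in> X" "x \<noteq> y"
    using incidence_set_two_elements[OF X] .
  then obtain i where i: "i \<in> I" "parallel (r i) x y"
    using incidence_set_ex1_parallel[OF X] by blast
  have "X \<subseteq> E"
    by (rule incidence_set_subset[OF X])
  have x_parallel: "parallel (r i) x e" if e: "e \<in> X" for e
  proof -
    consider "e = x" | "e = y" | "e \<noteq> x" "e \<noteq> y"
      by blast
    then show ?thesis
    proof cases
      case 1
      then show ?thesis
        using parallel_refl[OF i(2)] by simp
    next
      case 2
      then show ?thesis
        using i(2) by simp
    next
      case 3
      then have "x \<noteq> e" "y \<noteq> e"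
        by auto
      obtain j where j: "j \<in> I" "parallel (r j) x e"
        using incidence_set_ex1_parallel[OF X xy(1) e \<open>x \<noteq> e\<close>] by blast
      have "i = j"
        using incidence_set_parallel_index_eq[OF X xy(1,2) e xy(3) \<open>x \<noteq> e\<close> \<open>y \<noteq> e\<close> i(1) j(1) i(2) j(2)] .
      with j show ?thesis
        by simp
    qed
  qed
  have "parallel (r i) e f" if "e \<in> X" "f \<in> X" for e f
  proof -
    have "parallel (r i) e x"
      using x_parallel[OF that(1)] parallel_sym by metis
    moreover have "parallel (r i) x f"
      using x_parallel[OF that(2)] .
    moreover have "e \<in> E" "f \<in> E" "x \<in> E"
      using that xy(1) \<open>X \<subseteq> E\<close> by auto
    ultimately show ?thesis
      by (rule parallel_trans[OF matroid[OF i(1)]])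
  qed
  with i show ?thesis
    unfolding all_parallel_def by blast
qed

lemma incidence_set_ex1_all_parallel:
  assumes X: "incidence_set E \<rho> X"
  shows "\<exists>!i. i \<in> I \<and> all_parallel (r i) X"
proof -
  obtain x y where "x \<in> X" "y \<in> X" "x \<noteq> y"
    using incidence_set_two_elements[OF X] .
  then have "\<exists>!i. i \<in> I \<and> parallel (r i) x y"
    using incidence_set_ex1_parallel[OF X] by blast
  then show ?thesis
    using incidence_set_ex_all_parallel[OF X] \<open>x \<in> X\<close> \<open>y \<in> X\<close>
    unfolding all_parallel_def by blast
qed

lemma incidence_set_no_two_parallel:
  assumes X: "incidence_set E \<rho> X" and "i \<in> I" "all_parallel (r i) X" and "j \<in> I" "j \<noteq> i"
  shows "no_two_parallel (r j) X"
  using assms incidence_set_ex1_parallel[OF X]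
  unfolding no_two_parallel_def all_parallel_def by blast

lemma incidence_set_circuit_card:
  assumes X: "incidence_set E \<rho> X" and rank_X: "\<rho> X = 1 + (\<Sum>e\<in>X. \<rho> {e} - 1)"
    and i: "i \<in> I" "all_parallel (r i) X" and j: "j \<in> I" "j \<noteq> i"
    and C: "C \<subseteq> X" "circuit E (r j) C"
  shows "card C = 1"
proof (rule ccontr)
  assume "card C \<noteq> 1"
  have "X \<subseteq> E"
    by (rule incidence_set_subset[OF X])
  obtain x where "x \<in> X"
    using incidence_set_two_elements[OF X] by blast
  have "r i X = 1"
    using rank_all_parallel[OF matroid[OF i(1)] \<open>X \<subseteq> E\<close> \<open>x \<in> X\<close> i(2)] .
  moreover have "r i {e} = 1" if "e \<in> X" for e
    using i(2) that unfolding all_parallel_def parallel_def by blast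
  ultimately have def_i: "deficiency (r i) X = int (card X) - 1"
    by (simp add: deficiency_def)
  have "0 < deficiency (r j) C"
    using circuit_deficiency_pos[OF matroid[OF j(1)] C(2) \<open>card C \<noteq> 1\<close>] .
  also have "\<dots> \<le> deficiency (r j) X"
    using deficiency_mono[OF polymatroid_summand[OF j(1)] C(1) \<open>X \<subseteq> E\<close>] .
  finally have "deficiency (r i) X + deficiency (r j) X > deficiency \<rho> X"
    using def_i rank_X by (simp add: rank_eq_one_plus_sum_iff_deficiency)
  moreover have "(\<Sum>m\<in>{i, j}. deficiency (r m) X) \<le> (\<Sum>m\<in>I. deficiency (r m) X)"
    using finite_index i j \<open>X \<subseteq> E\<close> deficiency_nonneg[OF polymatroid_summand]
    by (intro sum_mono2) auto
  ultimately show False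
    using deficiency_sum[OF \<open>X \<subseteq> E\<close>] j(2) by simp
qed

lemma incidence_sets_not_all_parallel_same:
  assumes X: "incidence_set E \<rho> X" and Y: "incidence_set E \<rho> Y"
    and "a \<in> X" "b \<in> Y" and "\<rho> {a, b} = \<rho> {a} + \<rho> {b}" and "c \<in> X \<inter> Y"
    and "i \<in> I"
  shows "\<not> (all_parallel (r i) X \<and> all_parallel (r i) Y)"
proof
  assume "all_parallel (r i) X \<and> all_parallel (r i) Y"
  then have "parallel (r i) a c" "parallel (r i) c b"
    using assms(3,4,6) unfolding all_parallel_def by auto
  moreover have "a \<in> E" "b \<in> E" "c \<in> E"
    using assms(3,4,6) incidence_set_subset[OF X] incidence_set_subset[OF Y] by auto
  ultimately have "parallel (r i) a b"
    by (rule parallel_trans[OF matroid[OF \<open>i \<in> I\<close>]])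
  then have "\<rho> {a, b} < \<rho> {a} + \<rho> {b}"
    using rank_pair_less_if_parallel[OF \<open>i \<in> I\<close>] \<open>a \<in> E\<close> \<open>b \<in> E\<close> by blast
  with \<open>\<rho> {a, b} = \<rho> {a} + \<rho> {b}\<close> show False
    by simp
qed

lemma incidence_sets_card_Int:
  assumes X: "incidence_set E \<rho> X" and Y: "incidence_set E \<rho> Y"
    and "a \<in> X" "b \<in> Y" and "\<rho> {a, b} = \<rho> {a} + \<rho> {b}" and "X \<inter> Y \<noteq> {}"
  shows "card (X \<inter> Y) = 1"
proof (rule ccontr)
  assume "card (X \<inter> Y) \<noteq> 1"
  moreover have "finite (X \<inter> Y)"
    using incidence_set_finite[OF X] by blast
  ultimately have "\<not> card (X \<inter> Y) \<le> Suc 0"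
    using \<open>X \<inter> Y \<noteq> {}\<close> by (simp add: le_Suc_eq)
  then obtain c d where cd: "c \<in> X \<inter> Y" "d \<in> X \<inter> Y" "c \<noteq> d"
    using card_le_Suc0_iff_eq[OF \<open>finite (X \<inter> Y)\<close>] by blast
  obtain i where i: "i \<in> I" "all_parallel (r i) X"
    using incidence_set_ex_all_parallel[OF X] by blast
  obtain j where j: "j \<in> I" "all_parallel (r j) Y"
    using incidence_set_ex_all_parallel[OF Y] by blast
  have "i = j"
    using incidence_set_ex1_parallel[OF X _ _ cd(3)] cd i j unfolding all_parallel_def by blast
  then show False
    using incidence_sets_not_all_parallel_same[OF assms(1-5) cd(1) i(1)] i j by blast
qed

end

theorem lemma2p5:
  fixes E :: "'a set" and \<rho> :: "'a set \<Rightarrow> int" and k :: nat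
    and r :: "nat \<Rightarrow> 'a set \<Rightarrow> int"
  assumes "polymatroid E \<rho>"
    and "\<forall>i\<in>{1..k}. matroid_rank E (r i)"
    and "\<forall>A. A \<subseteq> E \<longrightarrow> \<rho> A = (\<Sum>i\<in>{1..k}. r i A)"
  shows "(\<forall>X. incidence_set E \<rho> X \<longrightarrow>
            (\<exists>!i. i \<in> {1..k} \<and> all_parallel (r i) X)
          \<and> (\<forall>i\<in>{1..k}. all_parallel (r i) X \<longrightarrow>
               (\<forall>j\<in>{1..k}. j \<noteq> i \<longrightarrow> no_two_parallel (r j) X)
             \<and> (\<rho> X = 1 + (\<Sum>e\<in>X. \<rho> {e} - 1) \<longrightarrow>
                  (\<forall>j\<in>{1..k}. j \<noteq> i \<longrightarrow>
                     (\<forall>C. C \<subseteq> X \<and> circuit E (r j) C \<longrightarrow> card C = 1)))))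
       \<and> (\<forall>X Y a b. incidence_set E \<rho> X \<and> incidence_set E \<rho> Y \<and> a \<in> X \<and> b \<in> Y
            \<and> \<rho> {a, b} = \<rho> {a} + \<rho> {b} \<and> X \<inter> Y \<noteq> {} \<longrightarrow>
            card (X \<inter> Y) = 1
          \<and> (\<forall>i\<in>{1..k}. \<forall>j\<in>{1..k}. all_parallel (r i) X \<and> all_parallel (r j) Y \<longrightarrow> i \<noteq> j))"
proof -
  interpret matroid_sum E \<rho> "{1..k}" r
    using assms(2,3) by unfold_locales auto
  show ?thesis
  proof (intro conjI allI impI ballI; (elim conjE)?)
    show "\<exists>!i. i \<in> {1..k} \<and> all_parallel (r i) X" if "incidence_set E \<rho> X" for X
      using incidence_set_ex1_all_parallel that .
  qed (use incidence_set_no_two_parallel incidence_set_circuit_card incidence_sets_card_Int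
      incidence_sets_not_all_parallel_same in blast)+
qed

end
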